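(* Let $p$ be a prime, $w\ge1$, and $\mu>0$ a real number with $2^\mu$ an integer; let $c_\mu=\frac{2^\mu\sin(\pi/2^\mu)}{p\sin(\pi/p)}$. For any sets $A_1,\dots,A_{2^\mu}\subseteq\mathbb{F}_{p^w}$ with $\sum_{i=1}^{2^\mu}|A_i|=p^w$, \[ \sum_{i=1}^{2^\mu}\max_{\alpha\in\mathbb{F}_{p^w}\setminus\{0\}}\left|\widehat{\mathbb 1_{A_i}}(\alpha)\right|\le c_\mu . \]
   Context: For $A\subseteq\mathbb{F}_{p^w}$, $\mathbb 1_A$ is its characteristic function. $\mathrm{Tr}$ is the trace $\mathbb{F}_{p^w}\to\mathbb{F}_p$ (values in $\{0,\dots,p-1\}$), $\omega_p=e^{2\pi\mathbf i/p}$, and $\hat f(\alpha)=p^{-w}\sum_{x\in\mathbb{F}_{p^w}}f(x)\omega_p^{\mathrm{Tr}(\alpha x)}$. *)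

theory Defs
  imports "HOL-Analysis.Analysis"
begin

text \<open>The field F_{p^w} is modelled by an arbitrary finite field type 'a with
  CARD('a) = p^w (p prime). The absolute trace F_{p^w} -> F_p is
  Tr(x) = x + x^p + ... + x^(p^(w-1)); its value lies in the prime field,
  i.e. equals of_nat k for a unique k < p, which we take as the value in {0..p-1}.\<close>

definition field_trace :: "nat \<Rightarrow> nat \<Rightarrow> 'a::field \<Rightarrow> 'a" where
  "field_trace p w x = (\<Sum>i<w. x ^ (p ^ i))"

definition trace_nat :: "nat \<Rightarrow> nat \<Rightarrow> 'a::field \<Rightarrow> nat" where
  "trace_nat p w x = (THE k. k < p \<and> of_nat k = field_trace p w x)"

definition omega :: "nat \<Rightarrow> complex" where
  "omega p = exp (2 * pi * \<i> / of_nat p)"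

definition indicator_fn :: "'a set \<Rightarrow> 'a \<Rightarrow> complex" where
  "indicator_fn A x = (if x \<in> A then 1 else 0)"

definition fourier :: "nat \<Rightarrow> nat \<Rightarrow> ('a::{field,finite} \<Rightarrow> complex) \<Rightarrow> 'a \<Rightarrow> complex" where
  "fourier p w f \<alpha> = (1 / of_nat (p ^ w)) *
      (\<Sum>x\<in>(UNIV::'a set). f x * omega p ^ trace_nat p w (\<alpha> * x))"

end

theory Submission
  imports Defs "HOL-Number_Theory.Residues" "HOL-Computational_Algebra.Polynomial"
begin

text \<open>For \<open>\<alpha> \<noteq> 0\<close> the map \<open>x \<mapsto> Tr(\<alpha> x)\<close> is a nonzero additive polynomial of degree
  \<open>M = p\<^sup>w\<^sup>-\<^sup>1\<close>, so it takes each value in \<open>F\<^sub>p\<close> at most \<open>M\<close> times. Hence the exponential sum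
  over \<open>A\<close> splits into \<open>M\<close> sums of distinct \<open>p\<close>-th roots of unity, of sizes \<open>r\<^sub>l\<close> adding up to
  \<open>|A|\<close>, and a sum of \<open>r\<close> distinct \<open>p\<close>-th roots of unity has modulus at most
  \<open>sin (\<pi> r / p) / sin (\<pi> / p)\<close>, the value for \<open>r\<close> consecutive ones. Over all \<open>m = 2\<^sup>\<mu>\<close> sets
  this gives \<open>m M\<close> terms \<open>sin (\<pi> r / p)\<close> whose arguments add up to \<open>\<pi> M\<close>, and concavity of
  \<open>sin\<close> on \<open>[0, \<pi>]\<close> bounds their sum by \<open>m M sin (\<pi> / m)\<close>.\<close>

section \<open>The trace of a finite field\<close>

text \<open>The library version \<open>finite_field_power_card_eq_same\<close> requires the type class
  \<open>finite_field\<close>, which \<open>{field,finite}\<close> is not registered as.\<close>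
lemma field_power_card_eq_same:
  fixes x :: "'a::{field,finite}"
  shows "x ^ CARD('a) = x"
proof (cases "x = 0")
  case False
  define G :: "'a monoid" where "G = \<lparr>carrier = UNIV - {0}, monoid.mult = (*), one = 1\<rparr>"
  interpret G: comm_group G
  proof (rule comm_groupI)
    fix y assume "y \<in> carrier G"
    then show "\<exists>z\<in>carrier G. z \<otimes>\<^bsub>G\<^esub> y = \<one>\<^bsub>G\<^esub>"
      by (intro bexI[of _ "inverse y"]) (simp_all add: G_def)
  qed (simp_all add: G_def mult_ac)
  have pow: "x [^]\<^bsub>G\<^esub> n = x ^ n" for n
    by (induction n) (simp_all add: G_def)
  have "x ^ (CARD('a) - 1) = 1"
    using G.power_order_eq_one[of x] False unfolding pow by (simp add: G_def card_Diff_singleton)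
  moreover have "x ^ CARD('a) = x ^ (CARD('a) - 1) * x"
    using finite_UNIV_card_ge_0[where 'a='a] by (simp add: power_eq_if mult.commute)
  ultimately show ?thesis
    by simp
qed (simp add: finite_UNIV_card_ge_0)

lemma CHAR_eq_prime_if_card_eq_power:
  assumes "prime p" and "CARD('a::{field,finite}) = p ^ w"
  shows "CHAR('a) = p"
proof -
  have "CHAR('a) > 0"
    by (simp add: finite_imp_CHAR_pos)
  then have CHAR_prime: "prime CHAR('a)"
    by (rule prime_CHAR_semidom)
  moreover have "CHAR('a) dvd p ^ w"
    using CHAR_dvd_CARD[where 'a='a] assms(2) by simp
  then have "CHAR('a) dvd p"
    using CHAR_prime prime_dvd_power by blast
  ultimately show ?thesis
    using assms(1) by (simp add: primes_dvd_imp_eq)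
qed

locale prime_power_field =
  fixes p w :: nat and field_type :: "'a::{field,finite} itself"
  assumes prime: "prime p" and card: "CARD('a) = p ^ w"
begin

lemma two_le_p: "2 \<le> p"
  using prime prime_ge_2_nat by blast

lemma one_le_w: "1 \<le> w"
proof (rule ccontr)
  assume "\<not> 1 \<le> w"
  then have "CARD('a) = 1" using card by simp
  moreover have "CARD('a) \<ge> card {0, 1::'a}" by (rule card_mono) auto
  ultimately show False by simp
qed

lemma CHAR_eq: "CHAR('a) = p"
  using CHAR_eq_prime_if_card_eq_power prime card by blast

lemma power_p_power_add: "((x::'a) + y) ^ (p ^ i) = x ^ (p ^ i) + y ^ (p ^ i)"
  by (rule freshmans_dream') (simp_all add: CHAR_eq prime)

lemma field_trace_add: "field_trace p w ((x::'a) + y) = field_trace p w x + field_trace p w y"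
  by (simp add: field_trace_def power_p_power_add sum.distrib)

lemma field_trace_diff: "field_trace p w ((x::'a) - y) = field_trace p w x - field_trace p w y"
  using field_trace_add[of "x - y" y] by (simp add: algebra_simps)

lemma field_trace_power_p: "field_trace p w (x::'a) ^ p = field_trace p w x"
proof -
  have "field_trace p w x ^ p = (\<Sum>i<w. x ^ (p ^ Suc i))"
    unfolding field_trace_def
    by (subst freshmans_dream_sum) (simp_all add: CHAR_eq prime power_mult[symmetric] mult.commute)
  also have "\<dots> = (\<Sum>i<Suc w. x ^ (p ^ i)) - x"
    by (subst sum.lessThan_Suc_shift) simp
  also have "\<dots> = field_trace p w x"
    using field_power_card_eq_same[of x] by (simp add: card field_trace_def)
  finally show ?thesis .
qed

lemma of_nat_power_p: "(of_nat k :: 'a) ^ p = of_nat k"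
proof (induction k)
  case (Suc k)
  then show ?case
    using power_p_power_add[of "of_nat k" 1 1] by (simp add: add.commute)
qed (use two_le_p in simp)

lemma of_nat_eq_of_nat_less_p:
  "j < p \<Longrightarrow> k < p \<Longrightarrow> (of_nat j :: 'a) = of_nat k \<longleftrightarrow> j = k"
  by (auto simp: of_nat_eq_iff_cong_CHAR CHAR_eq cong_less_modulus_unique_nat)

lemma power_p_fixed_points: "{y::'a. y ^ p = y} = of_nat ` {..<p}"
proof (rule card_seteq[symmetric])
  define P :: "'a poly" where "P = Polynomial.monom 1 p - Polynomial.monom 1 1"
  have "degree P \<le> p"
    using two_le_p unfolding P_def by (intro degree_diff_le) (auto intro: order_trans[OF degree_monom_le])
  moreover have "Polynomial.coeff P p = 1"
    using two_le_p by (simp add: P_def coeff_monom)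
  then have "P \<noteq> 0"
    by auto
  moreover have "{y::'a. y ^ p = y} = {y. poly P y = 0}"
    by (auto simp: P_def poly_monom)
  ultimately have "card {y::'a. y ^ p = y} \<le> p"
    using card_poly_roots_bound[of P] by simp
  moreover have "card (of_nat ` {..<p} :: 'a set) = p"
    by (subst card_image) (auto intro!: inj_onI simp: of_nat_eq_of_nat_less_p)
  ultimately show "card {y::'a. y ^ p = y} \<le> card (of_nat ` {..<p} :: 'a set)"
    by simp
  show "of_nat ` {..<p} \<subseteq> {y::'a. y ^ p = y}"
    using of_nat_power_p by auto
qed simp

lemma trace_nat_less: "trace_nat p w (x::'a) < p"
  and of_nat_trace_nat: "of_nat (trace_nat p w x) = field_trace p w x"
proof -
  have "field_trace p w x \<in> {y. y ^ p = y}"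
    using field_trace_power_p[of x] by simp
  then obtain k where k: "k < p" "of_nat k = field_trace p w x"
    unfolding power_p_fixed_points by auto
  have "\<exists>!k. k < p \<and> of_nat k = field_trace p w x"
  proof (rule ex1I[of _ k])
    show "k < p \<and> of_nat k = field_trace p w x"
      using k by simp
    show "j = k" if "j < p \<and> of_nat j = field_trace p w x" for j
      using that k of_nat_eq_of_nat_less_p[of j k] by simp
  qed
  then have "trace_nat p w x < p \<and> of_nat (trace_nat p w x) = field_trace p w x"
    unfolding trace_nat_def by (rule theI')
  then show "trace_nat p w x < p" "of_nat (trace_nat p w x) = field_trace p w x"
    by simp_all
qed

lemma card_trace_zero_le:
  assumes "(\<alpha>::'a) \<noteq> 0"
  shows "card {x::'a. field_trace p w (\<alpha> * x) = 0} \<le> p ^ (w - 1)"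
proof -
  define Q :: "'a poly" where "Q = (\<Sum>i<w. Polynomial.monom (\<alpha> ^ (p ^ i)) (p ^ i))"
  have "{x::'a. field_trace p w (\<alpha> * x) = 0} = {x. poly Q x = 0}"
    by (simp add: Q_def field_trace_def poly_sum poly_monom power_mult_distrib)
  moreover have "Polynomial.coeff Q (p ^ (w - 1)) = (\<Sum>i\<in>{w - 1}. \<alpha> ^ (p ^ i))"
    unfolding Q_def coeff_sum coeff_monom using one_le_w two_le_p
    by (intro sum.mono_neutral_cong_right) (auto simp: power_inject_exp)
  then have "Q \<noteq> 0"
    using assms by auto
  moreover have "degree Q \<le> p ^ (w - 1)"
    unfolding Q_def
  proof (rule degree_sum_le)
    fix i assume "i \<in> {..<w}"
    then have "p ^ i \<le> p ^ (w - 1)"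
      using two_le_p by (intro power_increasing) auto
    then show "degree (Polynomial.monom (\<alpha> ^ p ^ i) (p ^ i)) \<le> p ^ (w - 1)"
      using degree_monom_le order_trans by blast
  qed simp
  ultimately show ?thesis
    using card_poly_roots_bound[of Q] by simp
qed

lemma card_trace_nat_fiber_le:
  assumes "(\<alpha>::'a) \<noteq> 0"
  shows "card {x::'a. trace_nat p w (\<alpha> * x) = j} \<le> p ^ (w - 1)"
proof (cases "{x::'a. trace_nat p w (\<alpha> * x) = j} = {}")
  case False
  then obtain x0 where x0: "trace_nat p w (\<alpha> * x0) = j" by auto
  have "(\<lambda>x. x - x0) ` {x. trace_nat p w (\<alpha> * x) = j} \<subseteq> {x. field_trace p w (\<alpha> * x) = 0}"
  proof (rule image_subsetI)
    fix x assume "x \<in> {x. trace_nat p w (\<alpha> * x) = j}"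
    then have "field_trace p w (\<alpha> * x) = field_trace p w (\<alpha> * x0)"
      using x0 by (simp flip: of_nat_trace_nat)
    then show "x - x0 \<in> {x. field_trace p w (\<alpha> * x) = 0}"
      by (simp add: right_diff_distrib field_trace_diff)
  qed
  then have "card {x. trace_nat p w (\<alpha> * x) = j} \<le> card {x. field_trace p w (\<alpha> * x) = 0}"
    by (metis (no_types) card_image card_mono finite inj_on_diff_right)
  then show ?thesis
    using card_trace_zero_le[OF assms] by linarith
qed simp

end

section \<open>Sums of roots of unity\<close>

definition roots_sum_bound :: "nat \<Rightarrow> nat \<Rightarrow> real" where
  "roots_sum_bound p r = sin (pi * real r / real p) / sin (pi / real p)"

lemma norm_cis_minus_one:
  assumes "0 \<le> x" and "x \<le> 2 * pi"
  shows "cmod (cis x - 1) = 2 * sin (x / 2)"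
proof -
  have "(cmod (cis x - 1))\<^sup>2 = (cos x - 1)\<^sup>2 + (sin x)\<^sup>2"
    by (simp add: cmod_def)
  also have "\<dots> = 2 - 2 * cos x"
    using sin_cos_squared_add[of x] by (simp add: power2_eq_square algebra_simps)
  also have "\<dots> = (2 * sin (x / 2))\<^sup>2"
    using cos_double[of "x / 2"] sin_cos_squared_add[of "x / 2"] by (simp add: power2_eq_square)
  finally have "(cmod (cis x - 1))\<^sup>2 = (2 * sin (x / 2))\<^sup>2" .
  moreover have "sin (x / 2) \<ge> 0"
    using assms by (intro sin_ge_zero) auto
  ultimately show ?thesis
    by (metis norm_ge_zero power2_eq_iff_nonneg mult_nonneg_nonneg zero_le_numeral)
qed

lemma omega_power: "omega p ^ j = cis (real j * (2 * pi / real p))"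
proof -
  have "omega p = cis (2 * pi / real p)"
    by (simp add: omega_def cis_conv_exp mult.commute)
  then show ?thesis
    by (simp add: Complex.DeMoivre)
qed

text \<open>Telescoping \<open>(cis h - 1) \<Sum>\<^sub>j\<^sub><\<^sub>r cis (j h) = cis (r h) - 1\<close>.\<close>
lemma norm_sum_cis_consecutive:
  assumes "p \<ge> 2" and "r \<le> p"
  shows "cmod (\<Sum>j<r. cis (real j * (2 * pi / real p))) = roots_sum_bound p r"
proof -
  define h where "h = 2 * pi / real p"
  have "(cis h - 1) * (\<Sum>j<r. cis (real j * h)) = (\<Sum>j<r. cis (real (Suc j) * h) - cis (real j * h))"
    by (simp add: sum_distrib_left algebra_simps cis_mult)
  also have "\<dots> = cis (real r * h) - 1"
    by (subst sum_lessThan_telescope) simp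
  finally have "cmod (cis h - 1) * cmod (\<Sum>j<r. cis (real j * h)) = cmod (cis (real r * h) - 1)"
    by (metis norm_mult)
  moreover have "real r * h \<le> 2 * pi"
    using assms unfolding h_def by (simp add: field_simps)
  ultimately have "sin (h / 2) * cmod (\<Sum>j<r. cis (real j * h)) = sin (real r * h / 2)"
    using assms norm_cis_minus_one[of h] norm_cis_minus_one[of "real r * h"]
    by (simp add: h_def field_simps)
  moreover have "sin (h / 2) > 0"
    using assms unfolding h_def by (intro sin_gt_zero) (auto simp: field_simps)
  ultimately show ?thesis
    unfolding h_def roots_sum_bound_def by (simp add: field_simps)
qed

lemma norm_sum_cis_eq_sum_cos:
  obtains \<theta> where "cmod (\<Sum>j\<in>T. cis (a j)) = (\<Sum>j\<in>T. cos (a j - \<theta>))"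
proof
  define z where "z = (\<Sum>j\<in>T. cis (a j))"
  have "cis (- Arg z) * z = complex_of_real (cmod z)"
    by (subst (2) rcis_cmod_Arg[symmetric]) (simp add: rcis_def cis_mult)
  then have "cmod z = Re (cis (- Arg z) * z)"
    by simp
  also have "\<dots> = (\<Sum>j\<in>T. cos (a j - Arg z))"
    by (simp add: z_def sum_distrib_left cis_mult Re_sum)
  finally show "cmod (\<Sum>j\<in>T. cis (a j)) = (\<Sum>j\<in>T. cos (a j - Arg z))"
    unfolding z_def .
qed

lemma sum_le_sum_if_threshold:
  fixes f :: "'b \<Rightarrow> real"
  assumes "finite U" and "B \<subseteq> U" and "T \<subseteq> U" and "card T = card B"
    and "\<And>k. k \<in> B \<Longrightarrow> c \<le> f k" and "\<And>k. k \<in> U - B \<Longrightarrow> f k \<le> c"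
  shows "sum f T \<le> sum f B"
proof -
  have fin: "finite T" "finite B"
    using assms(1-3) finite_subset by auto
  have card_eq: "card (T - B) = card (B - T)"
    using fin assms(4) by (simp add: card_Diff_subset_Int Int_commute)
  have "sum f (T - B) \<le> of_nat (card (T - B)) * c"
    using assms(3,6) by (intro sum_bounded_above) auto
  also have "\<dots> \<le> sum f (B - T)"
    unfolding card_eq using assms(5) by (intro sum_bounded_below) auto
  finally show ?thesis
    using sum.Int_Diff[OF fin(1), of f B] sum.Int_Diff[OF fin(2), of f T] by (simp add: Int_commute)
qed

lemma cos_window_lower:
  assumes "h > 0" and "real r * h \<le> 2 * pi" and "real r * h / 2 - h \<le> \<theta>" and "\<theta> \<le> real r * h / 2"
    and "k < r"
  shows "cos (real r * h / 2) \<le> cos (real k * h - \<theta>)"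
proof -
  have "(real k + 1) * h \<le> real r * h"
    using assms(1,5) by (intro mult_right_mono) auto
  then have "real k * h + h \<le> real r * h"
    by (simp add: algebra_simps)
  moreover have "0 \<le> real k * h"
    using assms(1) by simp
  ultimately have "\<bar>real k * h - \<theta>\<bar> \<le> real r * h / 2"
    using assms(3,4) unfolding abs_le_iff by linarith
  then have "cos (real r * h / 2) \<le> cos \<bar>real k * h - \<theta>\<bar>"
    using assms(2) by (intro cos_monotone_0_pi_le) auto
  then show ?thesis
    by simp
qed

lemma cos_window_upper:
  assumes "h > 0" and "real p * h = 2 * pi" and "real r * h / 2 - h \<le> \<theta>" and "\<theta> \<le> real r * h / 2"
    and "r \<le> k" and "k < p"
  shows "cos (real k * h - \<theta>) \<le> cos (real r * h / 2)"
proof -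
  have "real r * h \<le> real k * h" and "(real k + 1) * h \<le> real p * h"
    using assms(1,5,6) by (intro mult_right_mono; simp)+
  then have "real r * h \<le> real k * h" and "real k * h + h \<le> 2 * pi"
    using assms(2) by (simp_all add: algebra_simps)
  then have lower: "real r * h / 2 \<le> real k * h - \<theta>" and upper: "real k * h - \<theta> \<le> 2 * pi - real r * h / 2"
    using assms(3,4) by linarith+
  show ?thesis
  proof (cases "real k * h - \<theta> \<le> pi")
    case True
    then show ?thesis
      using lower assms(1) by (intro cos_monotone_0_pi_le) auto
  next
    case False
    then have "cos (2 * pi - (real k * h - \<theta>)) \<le> cos (real r * h / 2)"
      using upper assms(1) by (intro cos_monotone_0_pi_le) auto
    then show ?thesis
      by simp
  qed
qed

lemma cos_rotate_mod:
  assumes "real p * h = 2 * pi" and "p > 0"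
  shows "cos (real (nat ((int j + s) mod int p)) * h - (\<theta> + of_int s * h)) = cos (real j * h - \<theta>)"
proof -
  define d where "d = (int j + s) div int p"
  have "(int j + s) mod int p = int j + s - d * int p"
    using div_mult_mod_eq[of "int j + s" "int p"] unfolding d_def by linarith
  then have "real_of_int ((int j + s) mod int p) = real j + of_int s - of_int d * real p"
    by simp
  moreover have "real (nat ((int j + s) mod int p)) = real_of_int ((int j + s) mod int p)"
    using assms(2) by simp
  ultimately have "real (nat ((int j + s) mod int p)) = real j + of_int s - of_int d * real p"
    by simp
  then have "real (nat ((int j + s) mod int p)) * h = (real j + of_int s - of_int d * real p) * h"
    by (simp only:)
  also have "\<dots> = real j * h + of_int s * h - of_int d * (2 * pi)"
    unfolding assms(1)[symmetric] by (simp add: algebra_simps)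
  finally have "real (nat ((int j + s) mod int p)) * h - (\<theta> + of_int s * h) = (real j * h - \<theta>) - 2 * pi * of_int d"
    by (simp add: algebra_simps)
  then show ?thesis
    by (simp only:) (simp add: cos_diff)
qed

lemma inj_on_rotate_mod:
  assumes "T \<subseteq> {..<p}"
  shows "inj_on (\<lambda>j. nat ((int j + s) mod int p)) T"
proof (rule inj_onI)
  fix j k assume "j \<in> T" "k \<in> T" and eq: "nat ((int j + s) mod int p) = nat ((int k + s) mod int p)"
  then have "j < p" "k < p"
    using assms by auto
  then have "(int j + s) mod int p = (int k + s) mod int p"
    using eq by (simp add: eq_nat_nat_iff pos_mod_sign)
  then have "(int j + s + (- s)) mod int p = (int k + s + (- s)) mod int p"
    by (rule mod_add_cong) (rule refl)
  then show "j = k"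
    using \<open>j < p\<close> \<open>k < p\<close> by (simp flip: of_nat_mod)
qed

lemma obtain_shift_into_window:
  fixes h :: real
  assumes "h > 0"
  obtains s :: int where "c - h \<le> \<theta> + of_int s * h" and "\<theta> + of_int s * h \<le> c"
proof
  define s where "s = \<lceil>(c - h - \<theta>) / h\<rceil>"
  have "(c - h - \<theta>) / h \<le> of_int s" and "of_int s \<le> (c - h - \<theta>) / h + 1"
    unfolding s_def by (simp_all add: le_of_int_ceiling of_int_ceiling_le_add_one)
  then have "c - h - \<theta> \<le> of_int s * h" and "of_int s * h \<le> c - \<theta>"
    using assms by (simp_all add: field_simps)
  then show "c - h \<le> \<theta> + of_int s * h" and "\<theta> + of_int s * h \<le> c"
    by linarith+
qed

text \<open>Rotating the index set so that the phase \<open>\<theta>'\<close> lies in the middle of the arc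
  \<open>{0, \<dots>, r - 1}\<close>, the terms indexed by this arc dominate all others.\<close>
lemma obtain_sum_cos_le_sum_cos_consecutive:
  assumes "h > 0" and "real p * h = 2 * pi" and "T \<subseteq> {..<p}"
  obtains \<theta>' where "(\<Sum>j\<in>T. cos (real j * h - \<theta>)) \<le> (\<Sum>k<card T. cos (real k * h - \<theta>'))"
proof -
  define r where "r = card T"
  have "r \<le> p"
    using card_mono[OF _ assms(3)] by (simp add: r_def)
  then have "real r * h \<le> 2 * pi"
    using mult_right_mono[of "real r" "real p" h] assms(1,2) by simp
  have "p > 0"
    using assms(1,2) by (auto intro: ccontr)
  obtain s :: int where window: "real r * h / 2 - h \<le> \<theta> + of_int s * h" "\<theta> + of_int s * h \<le> real r * h / 2"
    using obtain_shift_into_window[OF assms(1)] by blast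
  define \<rho> where "\<rho> j = nat ((int j + s) mod int p)" for j
  have "inj_on \<rho> T"
    unfolding \<rho>_def using assms(3) by (rule inj_on_rotate_mod)
  moreover have "cos (real (\<rho> j) * h - (\<theta> + of_int s * h)) = cos (real j * h - \<theta>)" for j
    unfolding \<rho>_def using assms(2) \<open>p > 0\<close> by (rule cos_rotate_mod)
  ultimately have "(\<Sum>j\<in>T. cos (real j * h - \<theta>)) = (\<Sum>k\<in>\<rho> ` T. cos (real k * h - (\<theta> + of_int s * h)))"
    by (simp add: sum.reindex)
  also have "\<dots> \<le> (\<Sum>k<r. cos (real k * h - (\<theta> + of_int s * h)))"
  proof (rule sum_le_sum_if_threshold[where U = "{..<p}" and c = "cos (real r * h / 2)"])
    show "card (\<rho> ` T) = card {..<r}"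
      using \<open>inj_on \<rho> T\<close> by (simp add: card_image r_def)
    show "cos (real r * h / 2) \<le> cos (real k * h - (\<theta> + of_int s * h))" if "k \<in> {..<r}" for k
      using that assms(1) window \<open>real r * h \<le> 2 * pi\<close> by (intro cos_window_lower) auto
    show "cos (real k * h - (\<theta> + of_int s * h)) \<le> cos (real r * h / 2)" if "k \<in> {..<p} - {..<r}" for k
      using that assms(1,2) window by (intro cos_window_upper[of h p]) auto
  qed (use \<open>p > 0\<close> \<open>r \<le> p\<close> in \<open>auto simp: \<rho>_def nat_less_iff\<close>)
  finally show ?thesis
    unfolding r_def by (rule that)
qed

lemma norm_sum_omega_subset_le:
  assumes "p \<ge> 2" and "T \<subseteq> {..<p}"
  shows "cmod (\<Sum>j\<in>T. omega p ^ j) \<le> roots_sum_bound p (card T)"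
proof -
  define h where "h = 2 * pi / real p"
  have h: "h > 0" "real p * h = 2 * pi"
    using assms(1) by (auto simp: h_def)
  obtain \<theta> where "cmod (\<Sum>j\<in>T. omega p ^ j) = (\<Sum>j\<in>T. cos (real j * h - \<theta>))"
    using norm_sum_cis_eq_sum_cos[of "\<lambda>j. real j * h" T] by (auto simp: omega_power h_def)
  also obtain \<theta>' where "\<dots> \<le> (\<Sum>k<card T. cos (real k * h - \<theta>'))"
    using obtain_sum_cos_le_sum_cos_consecutive[OF h assms(2)] by blast
  also have "\<dots> = Re (cis (- \<theta>') * (\<Sum>k<card T. cis (real k * h)))"
    by (simp add: sum_distrib_left cis_mult Re_sum)
  also have "\<dots> \<le> cmod (\<Sum>k<card T. cis (real k * h))"
    using complex_Re_le_cmod by (metis norm_cis norm_mult mult_1_left)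
  also have "\<dots> = roots_sum_bound p (card T)"
    unfolding h_def using assms(1) card_mono[OF _ assms(2)] by (intro norm_sum_cis_consecutive) auto
  finally show ?thesis .
qed

section \<open>Layer decomposition and concavity\<close>

lemma obtain_fiberwise_injective_labelling:
  assumes "finite A" and "\<And>j. card {x\<in>A. t x = j} \<le> M"
  obtains g :: "'a \<Rightarrow> nat" where "g ` A \<subseteq> {1..M}" and "inj_on (\<lambda>x. (t x, g x)) A"
proof -
  have "\<exists>g. g ` {x\<in>A. t x = j} \<subseteq> {1..M} \<and> inj_on g {x\<in>A. t x = j}" for j
    using assms by (intro card_le_inj) auto
  then obtain G where G: "\<And>j. G j ` {x\<in>A. t x = j} \<subseteq> {1..M}" "\<And>j. inj_on (G j) {x\<in>A. t x = j}"
    by metis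
  show ?thesis
  proof
    show "(\<lambda>x. G (t x) x) ` A \<subseteq> {1..M}"
      using G(1) by blast
    show "inj_on (\<lambda>x. (t x, G (t x) x)) A"
    proof (rule inj_onI)
      fix x y assume "x \<in> A" "y \<in> A" "(t x, G (t x) x) = (t y, G (t y) y)"
      then show "x = y"
        using G(2)[of "t x"] by (auto simp: inj_on_def)
    qed
  qed
qed

lemma norm_sum_omega_le_layers:
  fixes t :: "'a \<Rightarrow> nat"
  assumes "p \<ge> 2" and "finite A" and "\<And>x. x \<in> A \<Longrightarrow> t x < p"
    and "\<And>j. card {x\<in>A. t x = j} \<le> M"
  obtains r where "\<And>l. r l \<le> p" and "(\<Sum>l=1..M. r l) = card A"
    and "cmod (\<Sum>x\<in>A. omega p ^ t x) \<le> (\<Sum>l=1..M. roots_sum_bound p (r l))"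
proof -
  obtain g where g: "g ` A \<subseteq> {1..M}" "inj_on (\<lambda>x. (t x, g x)) A"
    using obtain_fiberwise_injective_labelling assms(2,4) by blast
  define L where "L l = {x\<in>A. g x = l}" for l
  have inj: "inj_on t (L l)" for l
    using g(2) by (auto simp: L_def inj_on_def)
  have sub: "t ` L l \<subseteq> {..<p}" for l
    using assms(3) by (auto simp: L_def)
  have group: "(\<Sum>l=1..M. \<Sum>x\<in>L l. f x) = sum f A" for f :: "'a \<Rightarrow> 'b::comm_monoid_add"
    unfolding L_def by (rule sum.group[OF assms(2) finite_atLeastAtMost g(1)])
  show ?thesis
  proof
    show "card (t ` L l) \<le> p" for l
      using card_mono[OF _ sub] by simp
    show "(\<Sum>l=1..M. card (t ` L l)) = card A"
      using group[of "\<lambda>_. 1::nat"] by (simp add: card_image inj)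
    have "cmod (\<Sum>x\<in>A. omega p ^ t x) = cmod (\<Sum>l=1..M. \<Sum>j\<in>t ` L l. omega p ^ j)"
      by (simp add: sum.reindex inj flip: group)
    also have "\<dots> \<le> (\<Sum>l=1..M. cmod (\<Sum>j\<in>t ` L l. omega p ^ j))"
      by (rule norm_sum)
    also have "\<dots> \<le> (\<Sum>l=1..M. roots_sum_bound p (card (t ` L l)))"
      by (intro sum_mono norm_sum_omega_subset_le assms(1) sub)
    finally show "cmod (\<Sum>x\<in>A. omega p ^ t x)
        \<le> (\<Sum>l=1..M. roots_sum_bound p (card (t ` L l)))" .
  qed
qed

lemma sum_sin_le_card_times_sin_mean:
  fixes y :: "'b \<Rightarrow> real"
  assumes "finite S" and "S \<noteq> {}" and "\<And>i. i \<in> S \<Longrightarrow> y i \<in> {0..pi}"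
  shows "(\<Sum>i\<in>S. sin (y i)) \<le> real (card S) * sin ((\<Sum>i\<in>S. y i) / real (card S))"
proof -
  have "convex_on {0..pi} (\<lambda>x. - sin x)"
  proof (rule convex_on_realI[where f' = "\<lambda>x. - cos x"])
    show "((\<lambda>x. - sin x) has_real_derivative - cos x) (at x)" for x
      by (auto intro!: derivative_eq_intros)
    show "- cos x \<le> - cos y" if "x \<in> {0..pi}" "y \<in> {0..pi}" "x \<le> y" for x y
      using that cos_monotone_0_pi_le[of x y] by auto
  qed simp
  moreover define n where "n = real (card S)"
  moreover have "n > 0"
    using assms(1,2) unfolding n_def by (simp add: card_gt_0_iff)
  ultimately have "- sin (\<Sum>i\<in>S. (1 / n) *\<^sub>R y i) \<le> (\<Sum>i\<in>S. (1 / n) * - sin (y i))"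
    using assms by (intro convex_on_sum) (auto simp: n_def)
  then have "(\<Sum>i\<in>S. sin (y i)) / n \<le> sin ((\<Sum>i\<in>S. y i) / n)"
    by (simp add: sum_distrib_left[symmetric] sum_divide_distrib[symmetric] sum_negf)
  then show ?thesis
    using \<open>n > 0\<close> unfolding n_def by (simp add: field_simps)
qed

lemma sum_layer_bounds_le:
  fixes R :: "nat \<Rightarrow> nat \<Rightarrow> nat"
  assumes "p \<ge> 2" and "m \<ge> 1" and "M \<ge> 1" and "\<And>i l. R i l \<le> p"
    and "(\<Sum>i=1..m. \<Sum>l=1..M. R i l) = p * M"
  shows "(\<Sum>i=1..m. (\<Sum>l=1..M. roots_sum_bound p (R i l)) / real (p * M))
           \<le> real m * sin (pi / real m) / (real p * sin (pi / real p))"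
proof -
  define S where "S = {1..m} \<times> {1..M}"
  define y where "y z = pi * real (R (fst z) (snd z)) / real p" for z
  have "sin (pi / real p) > 0"
    using assms(1) by (intro sin_gt_zero) (auto simp: field_simps)
  have y_range: "y z \<in> {0..pi}" for z
    using assms(1,4) by (auto simp: y_def field_simps)
  have "(\<Sum>z\<in>S. y z) = pi / real p * real (\<Sum>i=1..m. \<Sum>l=1..M. R i l)"
    by (simp add: S_def y_def sum.cartesian_product split_def sum_distrib_left sum_divide_distrib)
  also have "\<dots> = pi * real M"
    using assms(1,5) by simp
  finally have "(\<Sum>z\<in>S. y z) / real (card S) = pi / real m"
    using assms(3) by (simp add: S_def)
  then have jensen: "(\<Sum>z\<in>S. sin (y z)) \<le> real (m * M) * sin (pi / real m)"
    using sum_sin_le_card_times_sin_mean[of S y] y_range assms(2,3) by (simp add: S_def)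
  have "(\<Sum>i=1..m. (\<Sum>l=1..M. roots_sum_bound p (R i l)) / real (p * M))
      = (\<Sum>i=1..m. \<Sum>l=1..M. sin (pi * real (R i l) / real p)) / (real (p * M) * sin (pi / real p))"
    by (simp add: roots_sum_bound_def sum_divide_distrib mult_ac)
  also have "\<dots> = (\<Sum>z\<in>S. sin (y z)) / (real (p * M) * sin (pi / real p))"
    by (simp add: S_def y_def sum.cartesian_product split_def)
  also have "\<dots> \<le> real (m * M) * sin (pi / real m) / (real (p * M) * sin (pi / real p))"
    using jensen \<open>sin (pi / real p) > 0\<close> assms(1,3) by (intro divide_right_mono) auto
  also have "\<dots> = real m * sin (pi / real m) / (real p * sin (pi / real p))"
    using assms(3) by simp
  finally show ?thesis .
qed

section \<open>Fourier coefficients of indicator functions\<close>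

definition max_fourier_coeff :: "nat \<Rightarrow> nat \<Rightarrow> 'a::{field,finite} set \<Rightarrow> real" where
  "max_fourier_coeff p w B = Max ((\<lambda>\<alpha>. cmod (fourier p w (indicator_fn B) \<alpha>)) ` (UNIV - {0}))"

lemma fourier_indicator_fn:
  "fourier p w (indicator_fn B) \<alpha> = (\<Sum>x\<in>B. omega p ^ trace_nat p w (\<alpha> * x)) / of_nat (p ^ w)"
proof -
  have "(\<Sum>x\<in>UNIV. indicator_fn B x * omega p ^ trace_nat p w (\<alpha> * x))
      = (\<Sum>x\<in>UNIV. if x \<in> B then omega p ^ trace_nat p w (\<alpha> * x) else 0)"
    by (rule sum.cong) (auto simp: indicator_fn_def)
  also have "\<dots> = (\<Sum>x\<in>B. omega p ^ trace_nat p w (\<alpha> * x))"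
    by (simp add: sum.If_cases)
  finally show ?thesis
    unfolding fourier_def by simp
qed

context prime_power_field
begin

lemma max_fourier_coeff_le_layers:
  fixes B :: "'a set"
  shows "\<exists>r. (\<forall>l. r l \<le> p) \<and> (\<Sum>l=1..p ^ (w - 1). r l) = card B \<and>
     max_fourier_coeff p w B \<le> (\<Sum>l=1..p ^ (w - 1). roots_sum_bound p (r l)) / real (p ^ w)"
proof -
  have "(1::'a) \<in> UNIV - {0}"
    by simp
  then have "UNIV - {0::'a} \<noteq> {}"
    by blast
  then have "max_fourier_coeff p w B \<in> (\<lambda>\<alpha>. cmod (fourier p w (indicator_fn B) \<alpha>)) ` (UNIV - {0::'a})"
    unfolding max_fourier_coeff_def by (intro Max_in) auto
  then obtain \<alpha> :: 'a where "\<alpha> \<noteq> 0" and max_eq: "max_fourier_coeff p w B = cmod (fourier p w (indicator_fn B) \<alpha>)"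
    by auto
  have fiber: "card {x\<in>B. trace_nat p w (\<alpha> * x) = j} \<le> p ^ (w - 1)" for j
  proof -
    have "card {x\<in>B. trace_nat p w (\<alpha> * x) = j} \<le> card {x. trace_nat p w (\<alpha> * x) = j}"
      by (rule card_mono) auto
    also have "\<dots> \<le> p ^ (w - 1)"
      by (rule card_trace_nat_fiber_le[OF \<open>\<alpha> \<noteq> 0\<close>])
    finally show ?thesis .
  qed
  obtain r where "\<And>l. r l \<le> p" and "(\<Sum>l=1..p ^ (w - 1). r l) = card B" and
    bound: "cmod (\<Sum>x\<in>B. omega p ^ trace_nat p w (\<alpha> * x)) \<le> (\<Sum>l=1..p ^ (w - 1). roots_sum_bound p (r l))"
    by (rule norm_sum_omega_le_layers[OF two_le_p finite trace_nat_less fiber]) blast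
  moreover have "max_fourier_coeff p w B = cmod (\<Sum>x\<in>B. omega p ^ trace_nat p w (\<alpha> * x)) / real (p ^ w)"
    unfolding max_eq by (simp add: fourier_indicator_fn norm_divide norm_power)
  ultimately show ?thesis
    by (intro exI[of _ r]) (simp add: divide_right_mono)
qed

lemma obtain_layer_sizes:
  fixes A :: "'b \<Rightarrow> 'a set"
  obtains R where "\<And>i l. R i l \<le> p" and "\<And>i. (\<Sum>l=1..p ^ (w - 1). R i l) = card (A i)"
    and "\<And>i. max_fourier_coeff p w (A i) \<le> (\<Sum>l=1..p ^ (w - 1). roots_sum_bound p (R i l)) / real (p ^ w)"
proof -
  have "\<forall>i. \<exists>r. (\<forall>l. r l \<le> p) \<and> (\<Sum>l=1..p ^ (w - 1). r l) = card (A i) \<and>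
      max_fourier_coeff p w (A i) \<le> (\<Sum>l=1..p ^ (w - 1). roots_sum_bound p (r l)) / real (p ^ w)"
    using max_fourier_coeff_le_layers by blast
  from choice[OF this] obtain R where "\<forall>i. (\<forall>l. R i l \<le> p) \<and> (\<Sum>l=1..p ^ (w - 1). R i l) = card (A i) \<and>
      max_fourier_coeff p w (A i) \<le> (\<Sum>l=1..p ^ (w - 1). roots_sum_bound p (R i l)) / real (p ^ w)"
    by blast
  then show ?thesis
    by (intro that[of R]) blast+
qed

end

theorem lemma4p5:
  fixes p w m :: nat and \<mu> :: real and A :: "nat \<Rightarrow> ('a::{field,finite}) set"
  assumes "prime p" and "w \<ge> 1" and "CARD('a) = p ^ w"
    and "\<mu> > 0" and "2 powr \<mu> = real m"
    and "(\<Sum>i=1..m. card (A i)) = p ^ w"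
  shows "(\<Sum>i=1..m. Max ((\<lambda>\<alpha>. cmod (fourier p w (indicator_fn (A i)) \<alpha>)) ` (UNIV - {0})))
           \<le> (real m * sin (pi / real m)) / (real p * sin (pi / real p))"
proof -
  interpret prime_power_field p w "TYPE('a)"
    using assms(1,3) by unfold_locales
  define M where "M = p ^ (w - 1)"
  have pM: "p ^ w = p * M"
    using assms(2) by (simp add: M_def power_eq_if)
  have "M \<ge> 1" and "m \<ge> 1"
    using two_le_p gr_one_powr[of 2 \<mu>] assms(4,5) by (simp_all add: M_def)
  obtain R where R: "\<And>i l. R i l \<le> p" "\<And>i. (\<Sum>l=1..M. R i l) = card (A i)"
    "\<And>i. max_fourier_coeff p w (A i) \<le> (\<Sum>l=1..M. roots_sum_bound p (R i l)) / real (p * M)"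
    using obtain_layer_sizes[of A, unfolded pM M_def] unfolding M_def by blast
  have "(\<Sum>i=1..m. max_fourier_coeff p w (A i)) \<le> (\<Sum>i=1..m. (\<Sum>l=1..M. roots_sum_bound p (R i l)) / real (p * M))"
    by (intro sum_mono R(3))
  also have "\<dots> \<le> (real m * sin (pi / real m)) / (real p * sin (pi / real p))"
  proof (rule sum_layer_bounds_le)
    have "(\<Sum>i=1..m. \<Sum>l=1..M. R i l) = (\<Sum>i=1..m. card (A i))"
      by (intro sum.cong refl R(2))
    then show "(\<Sum>i=1..m. \<Sum>l=1..M. R i l) = p * M"
      using assms(6) pM by simp
  qed (use two_le_p \<open>m \<ge> 1\<close> \<open>M \<ge> 1\<close> R(1) in auto)
  finally show ?thesis
    unfolding max_fourier_coeff_def .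
qed

end
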